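(* Let $(A,\diamond,\circ,\lambda)$ be a left semi-truss such that $(A,\circ)$ is a group and $(A,\diamond)$ is a left cancellative semigroup with an idempotent $e$. For $x\in A$ let $x^\circ$ denote its inverse in $(A,\circ)$. Then the map $r:A\times A\to A\times A$, $$r(a,b)=\Big(a\circ e^\circ\circ\big((e\circ a^\circ\circ e)\diamond b\big),\; e\circ\big((e\circ a^\circ\circ e)\diamond b\big)^\circ\circ b\Big),$$ is a solution of the set-theoretic Yang–Baxter equation, i.e. $(r\times\mathrm{id})(\mathrm{id}\times r)(r\times\mathrm{id})=(\mathrm{id}\times r)(r\times\mathrm{id})(\mathrm{id}\times r)$ as maps $A^3\to A^3$.
   Context: A left semi-truss $(A,\diamond,\circ,\lambda)$ is a set $A$ with two associative binary operations $\diamond,\circ$ and a function $\lambda:A\times A\to A$ such that $a\circ(b\diamond c)=(a\circ b)\diamond\lambda(a,c)$ for all $a,b,c\in A$. A semigroup $(A,\diamond)$ is left cancellative if $a\diamond b=a\diamond c$ implies $b=c$. *)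

theory Defs
  imports Main
begin

definition left_semi_truss ::
  "('a \<Rightarrow> 'a \<Rightarrow> 'a) \<Rightarrow> ('a \<Rightarrow> 'a \<Rightarrow> 'a) \<Rightarrow> ('a \<Rightarrow> 'a \<Rightarrow> 'a) \<Rightarrow> bool" where
  "left_semi_truss dm cm lam \<longleftrightarrow>
     (\<forall>a b c. dm (dm a b) c = dm a (dm b c)) \<and>
     (\<forall>a b c. cm (cm a b) c = cm a (cm b c)) \<and>
     (\<forall>a b c. cm a (dm b c) = dm (cm a b) (lam a c))"

definition is_group :: "('a \<Rightarrow> 'a \<Rightarrow> 'a) \<Rightarrow> bool" where
  "is_group cm \<longleftrightarrow>
     (\<forall>a b c. cm (cm a b) c = cm a (cm b c)) \<and>
     (\<exists>u. (\<forall>a. cm u a = a \<and> cm a u = a) \<and> (\<forall>a. \<exists>b. cm a b = u \<and> cm b a = u))"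

definition grp_inv :: "('a \<Rightarrow> 'a \<Rightarrow> 'a) \<Rightarrow> 'a \<Rightarrow> 'a" where
  "grp_inv cm a = (THE b. \<forall>x. cm (cm a b) x = x \<and> cm (cm b a) x = x)"

definition left_cancellative :: "('a \<Rightarrow> 'a \<Rightarrow> 'a) \<Rightarrow> bool" where
  "left_cancellative dm \<longleftrightarrow> (\<forall>a b c. dm a b = dm a c \<longrightarrow> b = c)"

definition YBE :: "('a \<times> 'a \<Rightarrow> 'a \<times> 'a) \<Rightarrow> bool" where
  "YBE r \<longleftrightarrow> (\<forall>x y z.
     (let r12 = (\<lambda>(a, b, c). (let (a', b') = r (a, b) in (a', b', c)));
          r23 = (\<lambda>(a, b, c). (let (b', c') = r (b, c) in (a, b', c')))
      in r12 (r23 (r12 (x, y, z))) = r23 (r12 (r23 (x, y, z)))))"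

definition sol_r :: "('a \<Rightarrow> 'a \<Rightarrow> 'a) \<Rightarrow> ('a \<Rightarrow> 'a \<Rightarrow> 'a) \<Rightarrow> 'a \<Rightarrow> 'a \<times> 'a \<Rightarrow> 'a \<times> 'a" where
  "sol_r dm cm e = (\<lambda>(a, b).
     (let i = grp_inv cm; t = dm (cm (cm e (i a)) e) b
      in (cm (cm a (i e)) t, cm (cm e (i t)) b)))"

end

theory Submission
  imports Defs
begin

text \<open>Transporting \<open>\<circ>\<close> along \<open>x \<mapsto> x \<circ> e\<^sup>\<circ>\<close> gives a group \<open>a \<cdot> b = a \<circ> e\<^sup>\<circ> \<circ> b\<close>
with neutral element \<open>e\<close>, and \<open>\<sigma>\<^sub>a = \<lambda>(a \<circ> e\<^sup>\<circ>, -)\<close> is an action of it. In this group the map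
is \<open>r(a,b) = (\<sigma>\<^sub>a b, \<sigma>\<^sub>a(b)\<^sup>-\<^sup>1 \<cdot> a \<cdot> b)\<close>, and because \<open>e\<close> is a left unit for \<open>\<diamond>\<close>, the identity
\<open>z \<diamond> w = z \<circ> e\<^sup>\<circ> \<circ> \<lambda>(e \<circ> z\<^sup>\<circ>, w)\<close> turns the semi-truss law into the cocycle condition
\<open>\<sigma>\<^sub>a(b \<cdot> c) = \<sigma>\<^sub>a(b) \<cdot> \<sigma>\<^bsub>\<tau>(a,b)\<^esub>(c)\<close>, where \<open>\<tau>(a,b)\<close> is the second component of \<open>r(a,b)\<close>.
Over a left cancellative semigroup, a map of this shape whose first component is an action
satisfying the cocycle condition always yields a solution of the Yang--Baxter equation.\<close>

lemma YBE_iff: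
  "YBE (\<lambda>(a, b). (\<sigma> a b, \<tau> a b)) \<longleftrightarrow>
     (\<forall>x y z. \<sigma> (\<sigma> x y) (\<sigma> (\<tau> x y) z) = \<sigma> x (\<sigma> y z) \<and>
              \<tau> (\<sigma> x y) (\<sigma> (\<tau> x y) z) = \<sigma> (\<tau> x (\<sigma> y z)) (\<tau> y z) \<and>
              \<tau> (\<tau> x y) z = \<tau> (\<tau> x (\<sigma> y z)) (\<tau> y z))"
  by (simp add: YBE_def)

lemma YBE_of_cocycle:
  fixes p \<sigma> \<tau> :: "'a \<Rightarrow> 'a \<Rightarrow> 'a"
  assumes assoc: "\<And>a b c. p (p a b) c = p a (p b c)"
    and cancel: "\<And>a b c. p a b = p a c \<Longrightarrow> b = c"
    and action: "\<And>a b c. \<sigma> a (\<sigma> b c) = \<sigma> (p a b) c"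
    and factor: "\<And>a b. p (\<sigma> a b) (\<tau> a b) = p a b"
    and cocycle: "\<And>a b c. \<sigma> a (p b c) = p (\<sigma> a b) (\<sigma> (\<tau> a b) c)"
  shows "YBE (\<lambda>(a, b). (\<sigma> a b, \<tau> a b))"
  unfolding YBE_iff
proof (intro allI conjI)
  fix x y z
  let ?L = "\<sigma> (\<sigma> x y) (\<sigma> (\<tau> x y) z)" and ?R = "\<sigma> (\<tau> x (\<sigma> y z)) (\<tau> y z)"
  show first: "?L = \<sigma> x (\<sigma> y z)"
    by (simp only: action factor)
  have split_left: "\<sigma> x (p y z) = p (\<sigma> x y) (\<sigma> (\<tau> x y) z)"
    by (rule cocycle)
  have split_right: "\<sigma> x (p y z) = p (\<sigma> x (\<sigma> y z)) ?R"
    using cocycle[of x "\<sigma> y z" "\<tau> y z"] by (simp only: factor)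
  have "p (\<sigma> x (\<sigma> y z)) (\<tau> (\<sigma> x y) (\<sigma> (\<tau> x y) z)) = \<sigma> x (p y z)"
    using factor[of "\<sigma> x y" "\<sigma> (\<tau> x y) z"] by (simp only: first split_left)
  also have "\<dots> = p (\<sigma> x (\<sigma> y z)) ?R"
    by (rule split_right)
  finally show "\<tau> (\<sigma> x y) (\<sigma> (\<tau> x y) z) = ?R"
    by (rule cancel)
  have "p (\<sigma> x (\<sigma> y z)) (p ?R (\<tau> (\<tau> x y) z)) = p (\<sigma> x (p y z)) (\<tau> (\<tau> x y) z)"
    by (simp only: assoc split_right)
  also have "\<dots> = p (\<sigma> x y) (p (\<sigma> (\<tau> x y) z) (\<tau> (\<tau> x y) z))"
    by (simp only: assoc split_left)
  also have "\<dots> = p (p x y) z"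
    by (simp only: factor assoc[symmetric])
  also have "\<dots> = p (p x (\<sigma> y z)) (\<tau> y z)"
    by (simp only: factor assoc)
  also have "\<dots> = p (\<sigma> x (\<sigma> y z)) (p ?R (\<tau> (\<tau> x (\<sigma> y z)) (\<tau> y z)))"
    by (simp only: factor assoc[symmetric])
  finally have "p ?R (\<tau> (\<tau> x y) z) = p ?R (\<tau> (\<tau> x (\<sigma> y z)) (\<tau> y z))"
    by (rule cancel)
  then show "\<tau> (\<tau> x y) z = \<tau> (\<tau> x (\<sigma> y z)) (\<tau> y z)"
    by (rule cancel)
qed

lemma is_group_grp_inv:
  assumes "is_group cm"
  obtains u where "\<And>a. cm u a = a" "\<And>a. cm a u = a"
    "\<And>a. cm a (grp_inv cm a) = u" "\<And>a. cm (grp_inv cm a) a = u"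
proof -
  from assms obtain u where assoc: "\<And>a b c. cm (cm a b) c = cm a (cm b c)"
    and unit: "\<And>a. cm u a = a" "\<And>a. cm a u = a"
    and inverse: "\<And>a. \<exists>b. cm a b = u \<and> cm b a = u"
    unfolding is_group_def by blast
  have "cm a (grp_inv cm a) = u \<and> cm (grp_inv cm a) a = u" for a
  proof -
    obtain b where b: "cm a b = u" "cm b a = u"
      using inverse by blast
    have "(\<forall>x. cm (cm a c) x = x \<and> cm (cm c a) x = x) \<longleftrightarrow> c = b" for c
    proof
      assume "\<forall>x. cm (cm a c) x = x \<and> cm (cm c a) x = x"
      then have "cm a c = u"
        by (metis unit(2))
      then show "c = b"
        by (metis assoc b(2) unit)
    qed (simp add: b unit)
    then have "grp_inv cm a = b"
      unfolding grp_inv_def by simp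
    with b show ?thesis
      by simp
  qed
  with unit that show thesis
    by blast
qed

locale semi_truss_group =
  fixes dm cm lam :: "'a \<Rightarrow> 'a \<Rightarrow> 'a" and e u :: 'a
  assumes truss: "left_semi_truss dm cm lam"
    and unit_left: "cm u a = a" and unit_right: "cm a u = a"
    and inv_right: "cm a (grp_inv cm a) = u" and inv_left: "cm (grp_inv cm a) a = u"
    and dm_cancel: "left_cancellative dm"
    and idem: "dm e e = e"
begin

abbreviation inv :: "'a \<Rightarrow> 'a" where
  "inv \<equiv> grp_inv cm"

lemma dm_assoc: "dm (dm a b) c = dm a (dm b c)"
  and cm_assoc: "cm (cm a b) c = cm a (cm b c)"
  and cm_dm: "cm a (dm b c) = dm (cm a b) (lam a c)"
  using truss unfolding left_semi_truss_def by blast+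

lemma dm_left_cancel: "dm a b = dm a c \<Longrightarrow> b = c"
  using dm_cancel unfolding left_cancellative_def by blast

lemma inv_cancel_left: "cm (inv a) (cm a x) = x"
  by (metis cm_assoc inv_left unit_left)

lemma inv_cancel_right: "cm a (cm (inv a) x) = x"
  by (metis cm_assoc inv_right unit_left)

lemma inv_unique: "cm a b = u \<Longrightarrow> b = inv a"
  by (metis inv_cancel_left unit_right)

lemma inv_inv: "inv (inv a) = a"
  by (metis inv_unique inv_left)

lemma inv_cm: "inv (cm a b) = cm (inv b) (inv a)"
  by (metis inv_unique cm_assoc inv_cancel_right inv_right)

lemmas group_simps = cm_assoc unit_left unit_right inv_left inv_right
  inv_cancel_left inv_cancel_right inv_inv inv_cm

lemma dm_e_left: "dm e y = y"
  by (rule dm_left_cancel[of e]) (metis dm_assoc idem)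

lemma lam_unit: "lam u c = c"
  by (rule dm_left_cancel[of b for b]) (metis unit_left cm_dm)

lemma lam_cm: "lam (cm a b) c = lam a (lam b c)"
proof -
  have "dm (cm (cm a b) u) (lam (cm a b) c) = dm (cm (cm a b) u) (lam a (lam b c))"
    using cm_assoc[of a b "dm u c"] by (simp add: cm_dm cm_assoc)
  then show ?thesis
    by (rule dm_left_cancel)
qed

lemma lam_dm: "lam a (dm c d) = dm (lam a c) (lam a d)"
proof -
  have "dm (cm a u) (lam a (dm c d)) = dm (cm a u) (dm (lam a c) (lam a d))"
    using cm_dm[of a u "dm c d"] cm_dm[of a "dm u c" d] by (simp only: cm_dm dm_assoc)
  then show ?thesis
    by (rule dm_left_cancel)
qed

text \<open>Write \<open>z = (z \<circ> e\<^sup>\<circ>) \<circ> e\<close> and expand \<open>(z \<circ> e\<^sup>\<circ>) \<circ> (e \<diamond> \<lambda>((z \<circ> e\<^sup>\<circ>)\<^sup>\<circ>, w))\<close> by the semi-truss law.\<close>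

lemma dm_eq_cm_lam: "dm z w = cm z (cm (inv e) (lam (cm e (inv z)) w))"
proof -
  let ?x = "cm z (inv e)"
  have "cm ?x (dm e (lam (inv ?x) w)) = dm (cm ?x e) (lam ?x (lam (inv ?x) w))"
    by (rule cm_dm)
  also have "\<dots> = dm z w"
    by (simp add: lam_cm[symmetric] group_simps lam_unit)
  finally show ?thesis
    by (simp add: dm_e_left group_simps)
qed

definition emul :: "'a \<Rightarrow> 'a \<Rightarrow> 'a" where
  "emul a b = cm a (cm (inv e) b)"

definition sigma :: "'a \<Rightarrow> 'a \<Rightarrow> 'a" where
  "sigma a b = lam (cm a (inv e)) b"

definition tau :: "'a \<Rightarrow> 'a \<Rightarrow> 'a" where
  "tau a b = cm e (cm (inv (sigma a b)) (emul a b))"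

lemma emul_assoc: "emul (emul a b) c = emul a (emul b c)"
  by (simp add: emul_def cm_assoc)

lemma emul_left_cancel: "emul a b = emul a c \<Longrightarrow> b = c"
  by (metis emul_def inv_cancel_left)

lemma sigma_action: "sigma a (sigma b c) = sigma (emul a b) c"
  by (simp add: sigma_def emul_def lam_cm[symmetric] cm_assoc)

lemma emul_sigma_tau: "emul (sigma a b) (tau a b) = emul a b"
  by (simp add: tau_def emul_def group_simps)

lemma sigma_emul: "sigma a (emul b c) = emul (sigma a b) (sigma (tau a b) c)"
proof -
  have "emul b c = dm b (lam (cm b (inv e)) c)"
    by (simp add: emul_def dm_eq_cm_lam lam_cm[symmetric] group_simps lam_unit)
  then have "sigma a (emul b c) = dm (sigma a b) (lam (cm a (cm (inv e) (cm b (inv e)))) c)"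
    by (simp add: sigma_def lam_dm lam_cm cm_assoc)
  also have "\<dots> = emul (sigma a b) (lam (cm e (cm (inv (sigma a b)) (cm a (cm (inv e) (cm b (inv e)))))) c)"
    by (simp add: dm_eq_cm_lam emul_def lam_cm cm_assoc)
  also have "\<dots> = emul (sigma a b) (sigma (tau a b) c)"
    by (simp add: sigma_def tau_def emul_def cm_assoc)
  finally show ?thesis .
qed

lemma YBE_sigma_tau: "YBE (\<lambda>(a, b). (sigma a b, tau a b))"
  by (rule YBE_of_cocycle[of emul])
    (fact emul_assoc emul_left_cancel sigma_action emul_sigma_tau sigma_emul)+

lemma sol_r_eq: "sol_r dm cm e = (\<lambda>(a, b). (sigma a b, tau a b))"
proof (intro ext, clarify)
  fix a b
  have "dm (cm (cm e (inv a)) e) b = cm e (cm (inv a) (sigma a b))"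
    unfolding sigma_def by (subst dm_eq_cm_lam) (simp only: group_simps)
  then show "sol_r dm cm e (a, b) = (sigma a b, tau a b)"
    by (simp add: sol_r_def Let_def tau_def emul_def group_simps)
qed

end

theorem corollary2p7:
  fixes dm cm lam :: "'a \<Rightarrow> 'a \<Rightarrow> 'a" and e :: 'a
  assumes "left_semi_truss dm cm lam"
    and "is_group cm"
    and "left_cancellative dm"
    and "dm e e = e"
  shows "YBE (sol_r dm cm e)"
proof -
  obtain u where "\<And>a. cm u a = a" "\<And>a. cm a u = a"
    "\<And>a. cm a (grp_inv cm a) = u" "\<And>a. cm (grp_inv cm a) a = u"
    using is_group_grp_inv[OF assms(2)] by blast
  with assms interpret semi_truss_group dm cm lam e u
    by unfold_locales
  show ?thesis
    by (simp only: sol_r_eq YBE_sigma_tau)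
qed

end
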